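(* Let $W\in\mathbb{R}^{m\times n}$ have columns $W_1,\dots,W_n\in\mathbb{R}^m$, all nonzero, and let $F:=WW^\top$. For each $i$ define the fractional dimensionality $$D_i:=\frac{\|W_i\|^4}{\sum_{j=1}^n (W_i^\top W_j)^2},$$ and the spectral measure $\mu_i:=\sum_{e:\lambda_e>0} p_{i,e}\,\delta_{\lambda_e}$, where $\lambda_e$ runs over the distinct positive eigenvalues of $F$, $P_e$ is the orthogonal projector onto the $\lambda_e$-eigenspace of $F$, and $p_{i,e}:=\|P_eW_i\|^2/\|W_i\|^2$. Assume the capacity bound is saturated: $\sum_{i=1}^n D_i=\operatorname{rank}(W)=m$. Then for every feature $i$ the spectral measure $\mu_i$ is a single Dirac mass $\delta_{\lambda_k}$ at some eigenvalue $\lambda_k>0$ of $F$; equivalently, $FW_i=\lambda_kW_i$.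
   Context: $\delta_\lambda$ denotes the Dirac (point) probability measure at $\lambda$. For nonzero columns, the weights $p_{i,e}$ are nonnegative and sum to $1$, so $\mu_i$ is a finitely supported probability measure on $(0,\infty)$. *)

theory Defs
  imports "HOL-Probability.Probability"
begin

text \<open>W is an m x n real matrix (rows indexed by 'm, columns by 'n);
  the i-th column is column i W; F = W W^T.\<close>

definition gram_F :: "real^'n^'m \<Rightarrow> real^'m^'m" where
  "gram_F W = W ** transpose W"

definition frac_dim :: "real^'n^'m \<Rightarrow> 'n \<Rightarrow> real" where
  "frac_dim W i = norm (column i W) ^ 4 / (\<Sum>j\<in>UNIV. (column i W \<bullet> column j W)^2)"

definition is_eigenvalue :: "real^'m^'m \<Rightarrow> real \<Rightarrow> bool" where
  "is_eigenvalue F l \<longleftrightarrow> (\<exists>v. v \<noteq> 0 \<and> F *v v = l *\<^sub>R v)"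

definition eigenspace :: "real^'m^'m \<Rightarrow> real \<Rightarrow> (real^'m) set" where
  "eigenspace F l = {v. F *v v = l *\<^sub>R v}"

definition orth_proj :: "(real^'m) set \<Rightarrow> real^'m \<Rightarrow> real^'m" where
  "orth_proj S x = (THE y. y \<in> S \<and> (\<forall>z\<in>S. orthogonal (x - y) z))"

definition spectral_weight :: "real^'n^'m \<Rightarrow> 'n \<Rightarrow> real \<Rightarrow> real" where
  "spectral_weight W i l =
     norm (orth_proj (eigenspace (gram_F W) l) (column i W)) ^ 2 / norm (column i W) ^ 2"

text \<open>mu_i = sum over distinct positive eigenvalues l of F of p_{i,l} delta_l,
  as a measure on the reals (all subsets measurable).\<close>
definition spectral_measure :: "real^'n^'m \<Rightarrow> 'n \<Rightarrow> real measure" where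
  "spectral_measure W i = density (count_space UNIV)
     (\<lambda>l. if l > 0 \<and> is_eigenvalue (gram_F W) l then ennreal (spectral_weight W i l) else 0)"

end

theory Submission
  imports Defs
begin

text \<open>Write \<open>a\<close> for a column of \<open>W\<close> and \<open>G\<close> for the inverse of \<open>F = W W\<^sup>T\<close>, which exists
  because \<open>W\<close> has full row rank. Cauchy-Schwarz applied to \<open>W\<^sup>T G a\<close> and \<open>W\<^sup>T a\<close>, whose inner
  product is \<open>\<parallel>a\<parallel>\<^sup>2\<close>, bounds the fractional dimensionality of \<open>a\<close> by the leverage score
  \<open>a\<^sup>T G a\<close>. The leverage scores of all columns add up to \<open>tr (G W W\<^sup>T) = m\<close>, so saturation
  forces equality for every column, i.e. \<open>W\<^sup>T G a\<close> is parallel to \<open>W\<^sup>T a\<close>. Hence \<open>a\<close> is an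
  eigenvector of \<open>F\<close>, and an eigenvector lies in one eigenspace and is orthogonal to all
  the others, so its spectral measure is a single Dirac mass.\<close>

declare transpose_matrix_vector [simp del]

lemma inner_matrix_vector_mult_transpose:
  fixes A :: "real^'n^'m"
  shows "(A *v x) \<bullet> y = x \<bullet> (transpose A *v y)"
  by (metis dot_lmul_matrix vector_transpose_matrix)

lemma inner_transpose_mult_gram_F:
  fixes W :: "real^'n^'m"
  shows "(transpose W *v x) \<bullet> (transpose W *v y) = x \<bullet> (gram_F W *v y)"
proof -
  have "(transpose W *v x) \<bullet> (transpose W *v y) = x \<bullet> (W *v (transpose W *v y))"
    using inner_matrix_vector_mult_transpose[of "transpose W"] by (simp only: transpose_transpose)
  then show ?thesis
    by (simp only: gram_F_def matrix_vector_mul_assoc)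
qed

lemma transpose_gram_F [simp]: "transpose (gram_F W) = gram_F W"
  by (simp add: gram_F_def matrix_transpose_mul)

lemma frac_dim_eq:
  fixes W :: "real^'n^'m"
  shows "frac_dim W i = (column i W \<bullet> column i W)^2 / norm (transpose W *v column i W)^2"
proof -
  have entry: "(transpose W *v a) $ j = a \<bullet> column j W" for a j
    by (simp add: matrix_vector_mult_def transpose_def column_def inner_vec_def mult.commute)
  have "norm (transpose W *v a)^2 = (\<Sum>j\<in>UNIV. ((transpose W *v a) $ j)^2)" for a
    unfolding power2_norm_eq_inner by (simp only: inner_vec_def inner_real_def power2_eq_square)
  then have "(\<Sum>j\<in>UNIV. (a \<bullet> column j W)^2) = norm (transpose W *v a)^2" for a
    by (simp only: entry)
  moreover have "norm a ^ 4 = (a \<bullet> a)^2" for a :: "real^'m"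
    by (simp flip: power2_norm_eq_inner power_mult)
  ultimately show ?thesis
    by (simp only: frac_dim_def)
qed

lemma sum_quadratic_form_columns:
  fixes W :: "real^'n^'m" and G :: "real^'m^'m"
  shows "(\<Sum>i\<in>UNIV. (G *v column i W) \<bullet> column i W) = trace (G ** gram_F W)"
proof -
  have "(\<Sum>i\<in>UNIV. (G *v column i W) \<bullet> column i W)
      = (\<Sum>i\<in>UNIV. \<Sum>k\<in>UNIV. \<Sum>l\<in>UNIV. G$k$l * W$l$i * W$k$i)"
    by (simp add: inner_vec_def matrix_vector_mult_def column_def sum_distrib_right)
  also have "\<dots> = (\<Sum>k\<in>UNIV. \<Sum>i\<in>UNIV. \<Sum>l\<in>UNIV. G$k$l * W$l$i * W$k$i)"
    by (rule sum.swap)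
  also have "\<dots> = (\<Sum>k\<in>UNIV. \<Sum>l\<in>UNIV. \<Sum>i\<in>UNIV. G$k$l * W$l$i * W$k$i)"
    by (rule sum.cong[OF refl], rule sum.swap)
  also have "\<dots> = trace (G ** gram_F W)"
    by (simp add: trace_def gram_F_def matrix_matrix_mult_def transpose_def
        sum_distrib_left mult.assoc)
  finally show ?thesis .
qed

lemma gram_F_left_invertible:
  fixes W :: "real^'n^'m"
  assumes "rank W = CARD('m)"
  obtains G where "G ** gram_F W = mat 1"
proof -
  have inj_transpose: "inj ((*v) (transpose W))"
    using assms by (simp add: rank_transpose flip: full_rank_injective)
  have "x = y" if "gram_F W *v x = gram_F W *v y" for x y
  proof -
    have "gram_F W *v (x - y) = 0"
      using that by (simp add: matrix_vector_mult_diff_distrib)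
    then have "(transpose W *v (x - y)) \<bullet> (transpose W *v (x - y)) = 0"
      by (simp only: inner_transpose_mult_gram_F inner_zero_right)
    then have "transpose W *v x = transpose W *v y"
      by (simp only: inner_eq_zero_iff matrix_vector_mult_diff_distrib right_minus_eq)
    then show "x = y"
      by (rule injD[OF inj_transpose])
  qed
  then show ?thesis
    using that matrix_left_invertible_injective by (metis injI)
qed

lemma Cauchy_Schwarz_eq_imp_parallel:
  fixes x y :: "'a::real_inner"
  assumes eq: "(x \<bullet> y)^2 = (x \<bullet> x) * (y \<bullet> y)" and "y \<noteq> 0"
  shows "x = (x \<bullet> y / (y \<bullet> y)) *\<^sub>R y"
proof -
  define t where "t = x \<bullet> y / (y \<bullet> y)"
  have "(x - t *\<^sub>R y) \<bullet> (x - t *\<^sub>R y) = x \<bullet> x - 2 * t * (x \<bullet> y) + t^2 * (y \<bullet> y)"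
    by (simp add: inner_commute power2_eq_square algebra_simps)
  also have "\<dots> = 0"
    using eq \<open>y \<noteq> 0\<close> by (simp add: t_def field_simps power2_eq_square)
  finally show ?thesis
    by (simp add: t_def)
qed

context
  fixes W :: "real^'n^'m" and G :: "real^'m^'m"
  assumes left_inverse: "G ** gram_F W = mat 1"
begin

lemma gram_F_right_inverse: "gram_F W *v (G *v x) = x"
proof -
  have "gram_F W ** G = mat 1"
    using left_inverse matrix_left_right_inverse by blast
  then show ?thesis
    by (simp add: matrix_vector_mul_assoc)
qed

lemma transpose_mult_nonzero:
  assumes "a \<noteq> 0"
  shows "transpose W *v a \<noteq> 0"
proof
  assume "transpose W *v a = 0"
  then have "gram_F W *v a = 0"
    by (simp add: gram_F_def flip: matrix_vector_mul_assoc)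
  then have "G *v (gram_F W *v a) = 0"
    by simp
  with left_inverse assms show False
    by (simp add: matrix_vector_mul_assoc)
qed

lemma inner_transpose_mult_inverse:
  shows "(transpose W *v (G *v a)) \<bullet> (transpose W *v a) = a \<bullet> a"
    and "(transpose W *v (G *v a)) \<bullet> (transpose W *v (G *v a)) = (G *v a) \<bullet> a"
proof -
  have "(G *v a) \<bullet> (gram_F W *v a) = a \<bullet> (gram_F W *v (G *v a))"
    by (metis inner_commute inner_matrix_vector_mult_transpose transpose_gram_F)
  then show "(transpose W *v (G *v a)) \<bullet> (transpose W *v a) = a \<bullet> a"
    by (simp add: inner_transpose_mult_gram_F gram_F_right_inverse)
  show "(transpose W *v (G *v a)) \<bullet> (transpose W *v (G *v a)) = (G *v a) \<bullet> a"
    by (simp add: inner_transpose_mult_gram_F gram_F_right_inverse)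
qed

lemma frac_dim_le_quadratic_form: "frac_dim W i \<le> (G *v column i W) \<bullet> column i W"
proof -
  let ?a = "column i W"
  have quadratic_form_nonneg: "0 \<le> (G *v ?a) \<bullet> ?a"
    by (metis inner_transpose_mult_inverse(2) inner_ge_zero)
  have "(?a \<bullet> ?a)^2 \<le> ((G *v ?a) \<bullet> ?a) * norm (transpose W *v ?a)^2"
    using Cauchy_Schwarz_ineq[of "transpose W *v (G *v ?a)" "transpose W *v ?a"]
    by (simp add: inner_transpose_mult_inverse power2_norm_eq_inner)
  then show ?thesis
    using quadratic_form_nonneg
    by (cases "transpose W *v ?a = 0") (simp_all add: frac_dim_eq divide_le_eq)
qed

lemma frac_dim_eq_imp_eigenvector:
  assumes nonzero: "column i W \<noteq> 0"
    and eq: "frac_dim W i = (G *v column i W) \<bullet> column i W"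
  shows "\<exists>l>0. gram_F W *v column i W = l *\<^sub>R column i W"
proof -
  let ?a = "column i W"
  define u where "u = transpose W *v (G *v ?a)"
  define v where "v = transpose W *v ?a"
  have v_nonzero: "v \<noteq> 0"
    using transpose_mult_nonzero[OF nonzero] by (simp add: v_def)
  have uv: "u \<bullet> v = ?a \<bullet> ?a" and uu: "u \<bullet> u = (G *v ?a) \<bullet> ?a"
    by (simp_all add: u_def v_def inner_transpose_mult_inverse)
  define c where "c = u \<bullet> v / (v \<bullet> v)"
  have c_pos: "c > 0"
    using nonzero v_nonzero by (simp add: c_def uv)
  have "frac_dim W i = (?a \<bullet> ?a)^2 / (v \<bullet> v)"
    by (simp add: frac_dim_eq v_def power2_norm_eq_inner)
  then have "(?a \<bullet> ?a)^2 = ((G *v ?a) \<bullet> ?a) * (v \<bullet> v)"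
    using eq v_nonzero by (simp add: divide_eq_eq)
  then have "(u \<bullet> v)^2 = (u \<bullet> u) * (v \<bullet> v)"
    by (simp only: uv uu)
  then have "u = c *\<^sub>R v"
    using v_nonzero unfolding c_def by (rule Cauchy_Schwarz_eq_imp_parallel)
  then have "transpose W *v (G *v ?a - c *\<^sub>R ?a) = 0"
    by (simp add: u_def v_def matrix_vector_mult_diff_distrib matrix_vector_mult_scaleR)
  then have "gram_F W *v (G *v ?a - c *\<^sub>R ?a) = 0"
    by (simp add: gram_F_def flip: matrix_vector_mul_assoc)
  then have "?a = c *\<^sub>R (gram_F W *v ?a)"
    by (simp add: matrix_vector_mult_diff_distrib matrix_vector_mult_scaleR gram_F_right_inverse)
  then have "(1 / c) *\<^sub>R ?a = (1 / c) *\<^sub>R c *\<^sub>R (gram_F W *v ?a)"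
    by (rule arg_cong)
  then have "gram_F W *v ?a = (1 / c) *\<^sub>R ?a"
    using c_pos by simp
  moreover have "1 / c > 0"
    using c_pos by simp
  ultimately show ?thesis
    by blast
qed

end

lemma subspace_eigenspace: "subspace (eigenspace F l)"
  by (simp add: subspace_def eigenspace_def matrix_vector_right_distrib
      matrix_vector_mult_scaleR scaleR_add_right)

lemma orth_proj_unique:
  assumes S: "subspace S" and "y \<in> S" and orth: "\<forall>z\<in>S. orthogonal (x - y) z"
  shows "orth_proj S x = y"
  unfolding orth_proj_def
proof (rule the_equality)
  show "y \<in> S \<and> (\<forall>z\<in>S. orthogonal (x - y) z)"
    using assms by blast
next
  fix y' assume y': "y' \<in> S \<and> (\<forall>z\<in>S. orthogonal (x - y') z)"
  then have "y' - y \<in> S"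
    using S \<open>y \<in> S\<close> subspace_diff by blast
  then have "(x - y) \<bullet> (y' - y) = 0" and "(x - y') \<bullet> (y' - y) = 0"
    using orth y' by (simp_all add: orthogonal_def)
  then have "(y' - y) \<bullet> (y' - y) = 0"
    by (simp add: algebra_simps)
  then show "y' = y"
    by simp
qed

lemma orth_proj_eigenspace_eigenvector:
  fixes F :: "real^'m^'m"
  assumes symmetric: "transpose F = F" and eigen: "F *v a = l *\<^sub>R a"
  shows "orth_proj (eigenspace F l') a = (if l' = l then a else 0)"
proof (cases "l' = l")
  case True
  have "orth_proj (eigenspace F l) a = a"
    using eigen
    by (intro orth_proj_unique subspace_eigenspace) (simp_all add: eigenspace_def orthogonal_clauses)
  with True show ?thesis by simp
next
  case False
  have "orthogonal a z" if "z \<in> eigenspace F l'" for z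
  proof -
    have "l * (a \<bullet> z) = (F *v a) \<bullet> z"
      using eigen by simp
    also have "\<dots> = a \<bullet> (F *v z)"
      using symmetric by (simp add: inner_matrix_vector_mult_transpose)
    also have "\<dots> = l' * (a \<bullet> z)"
      using that by (simp add: eigenspace_def)
    finally show ?thesis
      using False by (simp add: orthogonal_def)
  qed
  then have "orth_proj (eigenspace F l') a = 0"
    by (intro orth_proj_unique subspace_eigenspace) (simp_all add: eigenspace_def)
  then show ?thesis
    using False by simp
qed

lemma spectral_measure_eigenvector:
  assumes nonzero: "column i W \<noteq> 0" and "l > 0"
    and eigen: "gram_F W *v column i W = l *\<^sub>R column i W"
  shows "spectral_measure W i = return (count_space UNIV) l"
proof -
  have "is_eigenvalue (gram_F W) l"
    using eigen nonzero unfolding is_eigenvalue_def by blast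
  moreover have "spectral_weight W i l' = (if l' = l then 1 else 0)" for l'
    using nonzero by (simp add: spectral_weight_def orth_proj_eigenspace_eigenvector[OF _ eigen])
  ultimately show ?thesis
    unfolding spectral_measure_def return_count_space_eq_density
    using \<open>l > 0\<close> by (intro density_cong) (auto simp: indicator_def)
qed

theorem theorem1:
  fixes W :: "real^'n^'m"
  assumes nonzero: "\<And>i. column i W \<noteq> 0"
    and saturated: "(\<Sum>i\<in>UNIV. frac_dim W i) = real (rank W)"
    and full_rank: "rank W = CARD('m)"
  shows "\<forall>i. \<exists>l. l > 0 \<and> is_eigenvalue (gram_F W) l
            \<and> spectral_measure W i = return (count_space UNIV) l
            \<and> gram_F W *v column i W = l *\<^sub>R column i W"
proof
  fix i
  obtain G where G: "G ** gram_F W = mat 1"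
    using gram_F_left_invertible full_rank by blast
  have "(\<Sum>j\<in>UNIV. (G *v column j W) \<bullet> column j W - frac_dim W j) = 0"
    using sum_quadratic_form_columns[of G W] G saturated full_rank
    by (simp add: sum_subtractf trace_I)
  then have "frac_dim W i = (G *v column i W) \<bullet> column i W"
    using frac_dim_le_quadratic_form[OF G] by (simp add: sum_nonneg_eq_0_iff)
  then obtain l where "l > 0" and eigen: "gram_F W *v column i W = l *\<^sub>R column i W"
    using frac_dim_eq_imp_eigenvector[OF G nonzero] by blast
  moreover have "is_eigenvalue (gram_F W) l"
    using eigen nonzero unfolding is_eigenvalue_def by blast
  ultimately show "\<exists>l>0. is_eigenvalue (gram_F W) l
      \<and> spectral_measure W i = return (count_space UNIV) l
      \<and> gram_F W *v column i W = l *\<^sub>R column i W"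
    using spectral_measure_eigenvector nonzero by blast
qed

end
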